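(* Let $\omega\in I^{\mathbb N}$, $k\in\mathbb N$, $m_i=\#\{1\le j\le k:\omega_j=i\}$ for $i\in I$, $\vec m=(m_1,\dots,m_s)$, and $\vec 0\le\vec r\le\vec q$ in $\mathbb N_0^s$. Then $$A(\omega,k)_{\vec q,\vec r}=\sum_{\substack{\vec t\in\mathbb N_0^s:\ \vec q-\vec r-\vec m\le\vec t\le\vec q-\vec r\\ |\vec t|\le m_{s+1}}}(-1)^{|\vec t|}p_{s+1}^{-|\vec t|}\frac{m_{s+1}!}{(m_{s+1}-|\vec t|)!}\prod_{i=1}^s\frac{m_i!\,q_i!}{(m_i-(q_i-r_i-t_i))!\,(q_i-r_i-t_i)!\,t_i!\,r_i!\,p_i^{q_i-r_i-t_i}}.$$ Consequently there is $K\ge1$ depending on $\vec q$ and $\vec p$ but not on $k$ or $\omega$ with $|A(\omega,k)_{\vec q,\vec r}|\le K\big(\prod_{i=1}^s\tilde m_i^{q_i-r_i}\big)\tilde m_{s+1}^{|\vec q|-|\vec r|}$ and $|A(\omega,k)_{\vec q,\vec r}|\le Kk^{|\vec q|}$, where $\tilde m_j=\max\{1,m_j\}$. If $\omega_j\ne s+1$ for all $1\le j\le k$ and $m_i>q_i-r_i$ for all $i\le s$, then $A(\omega,k)_{\vec q,\vec r}\ge K'\prod_{i=1}^sm_i^{q_i-r_i}$ for a constant $K'>0$ depending only on $\vec q$.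
   Context: $s\ge1$, $I=\{1,\dots,s+1\}$, $\vec p=(p_1,\dots,p_s)\in(0,1)^s$ with $\sum p_i<1$, $p_{s+1}=1-\sum_{i\le s}p_i$. Matrices are indexed by $\mathbb N_0^s\times\mathbb N_0^s$ with the usual product; $\mathrm{Id}$ the identity; $1_{\vec n,\vec m}$ has a single entry $1$ at $(\vec n,\vec m)$; $\vec e_i$ the unit vectors; $D_i=\sum_{\vec n}n_i1_{\vec n,\vec n-\vec e_i}$. For $\omega\in I^{\mathbb N}$, $A_0(\omega,1)=p_{\omega_1}\mathrm{Id}+D_{\omega_1}$ if $\omega_1\le s$ and $A_0(\omega,1)=p_{s+1}\mathrm{Id}-\sum_{i\le s}D_i$ if $\omega_1=s+1$; $A_0(\omega,k)=A_0(\omega,1)A_0(\sigma\omega,1)\cdots A_0(\sigma^{k-1}\omega,1)$ with $\sigma$ the left shift; $A(\omega,k)=(p_{\omega_1}\cdots p_{\omega_k})^{-1}A_0(\omega,k)$. $\vec a\le\vec b$ is componentwise, $|\vec t|=\sum t_i$. *)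

theory Defs
  imports "HOL-Analysis.Analysis"
begin

text \<open>Multi-indices in N_0^s are functions nat => nat supported in {1..s}.
  Matrices indexed by N_0^s x N_0^s are functions of two multi-indices.\<close>

type_synonym mindex = "nat \<Rightarrow> nat"
type_synonym mat = "mindex \<Rightarrow> mindex \<Rightarrow> real"

definition Vec :: "nat \<Rightarrow> mindex set" where
  "Vec s = {n. \<forall>i. i \<notin> {1..s} \<longrightarrow> n i = 0}"

definition vle :: "nat \<Rightarrow> mindex \<Rightarrow> mindex \<Rightarrow> bool" where
  "vle s a b \<longleftrightarrow> (\<forall>i\<in>{1..s}. a i \<le> b i)"

definition vabs :: "nat \<Rightarrow> mindex \<Rightarrow> nat" where
  "vabs s t = (\<Sum>i=1..s. t i)"

definition unitv :: "nat \<Rightarrow> mindex" where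
  "unitv i = (\<lambda>j. if j = i then 1 else 0)"

definition Idm :: mat where
  "Idm n m = (if n = m then 1 else 0)"

definition Dm :: "nat \<Rightarrow> mat" where
  "Dm i n m = (if 1 \<le> n i \<and> m = n(i := n i - 1) then real (n i) else 0)"

definition mmult :: "nat \<Rightarrow> mat \<Rightarrow> mat \<Rightarrow> mat" where
  "mmult s A B n m = (\<Sum>\<^sub>\<infinity>l\<in>Vec s. A n l * B l m)"

text \<open>omega is indexed from 1: omega 1, omega 2, ...; the left shift.\<close>
definition shift :: "(nat \<Rightarrow> nat) \<Rightarrow> nat \<Rightarrow> nat" where
  "shift \<omega> = (\<lambda>j. \<omega> (j + 1))"

definition A01 :: "nat \<Rightarrow> (nat \<Rightarrow> real) \<Rightarrow> (nat \<Rightarrow> nat) \<Rightarrow> mat" where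
  "A01 s p \<omega> = (if \<omega> 1 \<le> s
      then (\<lambda>n m. p (\<omega> 1) * Idm n m + Dm (\<omega> 1) n m)
      else (\<lambda>n m. p (s + 1) * Idm n m - (\<Sum>i=1..s. Dm i n m)))"

fun A0 :: "nat \<Rightarrow> (nat \<Rightarrow> real) \<Rightarrow> (nat \<Rightarrow> nat) \<Rightarrow> nat \<Rightarrow> mat" where
  "A0 s p \<omega> 0 = Idm"
| "A0 s p \<omega> (Suc k) = mmult s (A01 s p \<omega>) (A0 s p (shift \<omega>) k)"

definition Am :: "nat \<Rightarrow> (nat \<Rightarrow> real) \<Rightarrow> (nat \<Rightarrow> nat) \<Rightarrow> nat \<Rightarrow> mat" where
  "Am s p \<omega> k n m = A0 s p \<omega> k n m / (\<Prod>j=1..k. p (\<omega> j))"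

definition valid_p :: "nat \<Rightarrow> (nat \<Rightarrow> real) \<Rightarrow> bool" where
  "valid_p s p \<longleftrightarrow> (\<forall>i\<in>{1..s}. 0 < p i \<and> p i < 1) \<and> (\<Sum>i=1..s. p i) < 1
      \<and> p (s + 1) = 1 - (\<Sum>i=1..s. p i)"

definition valid_omega :: "nat \<Rightarrow> (nat \<Rightarrow> nat) \<Rightarrow> bool" where
  "valid_omega s \<omega> \<longleftrightarrow> (\<forall>j\<ge>1. \<omega> j \<in> {1..s+1})"

definition cnt :: "(nat \<Rightarrow> nat) \<Rightarrow> nat \<Rightarrow> nat \<Rightarrow> nat" where
  "cnt \<omega> k i = card {j \<in> {1..k}. \<omega> j = i}"

definition Tset :: "nat \<Rightarrow> (nat \<Rightarrow> nat) \<Rightarrow> nat \<Rightarrow> mindex \<Rightarrow> mindex \<Rightarrow> mindex set" where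
  "Tset s \<omega> k q r = {t \<in> Vec s. (\<forall>i\<in>{1..s}.
        int (q i) - int (r i) - int (cnt \<omega> k i) \<le> int (t i) \<and> int (t i) \<le> int (q i) - int (r i))
      \<and> vabs s t \<le> cnt \<omega> k (s + 1)}"

definition Aformula :: "nat \<Rightarrow> (nat \<Rightarrow> real) \<Rightarrow> (nat \<Rightarrow> nat) \<Rightarrow> nat \<Rightarrow> mindex \<Rightarrow> mindex \<Rightarrow> real" where
  "Aformula s p \<omega> k q r =
    (\<Sum>t\<in>Tset s \<omega> k q r.
       (-1) ^ vabs s t * (1 / p (s + 1)) ^ vabs s t
       * fact (cnt \<omega> k (s + 1)) / fact (cnt \<omega> k (s + 1) - vabs s t)
       * (\<Prod>i=1..s.
           fact (cnt \<omega> k i) * fact (q i) /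
           (fact (cnt \<omega> k i - (q i - r i - t i)) * fact (q i - r i - t i) * fact (t i)
             * fact (r i) * p i ^ (q i - r i - t i))))"

end

theory Submission
  imports Defs
begin

text \<open>The matrices \<open>D\<^sub>i\<close> commute, so \<open>A(\<omega>,k)\<close> is a product of commuting factors
  \<open>Id + D\<^sub>i/p\<^sub>i\<close> (one for each letter \<open>i \<le> s\<close>) and \<open>Id - (D\<^sub>1 + \<dots> + D\<^sub>s)/p\<^sub>s\<^sub>+\<^sub>1\<close> (one for each
  letter \<open>s + 1\<close>), and depends only on the counts \<open>m\<^sub>i\<close>. It is the polynomial
  \<open>\<Prod>i\<le>s. (1 + x\<^sub>i/p\<^sub>i)\<^bsup>m\<^sub>i\<^esup> \<cdot> (1 - |x|/p\<^sub>s\<^sub>+\<^sub>1)\<^bsup>m\<^sub>s\<^sub>+\<^sub>1\<^esup>\<close> evaluated at \<open>x = D\<close>, and the \<open>(q, r)\<close> entry of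
  \<open>D\<^sup>\<alpha>\<close> is \<open>q!/r!\<close> if \<open>\<alpha> = q - r\<close> and \<open>0\<close> otherwise; expanding the polynomial by the binomial and
  multinomial theorems gives the formula. Formally this is an induction on \<open>k\<close>: multiplying by
  \<open>A(\<omega>,1)\<close> on the left raises one count by one, and the polynomial coefficients satisfy the
  matching Pascal-type recurrences. The upper bounds estimate each of the boundedly many summands.
  Without the letter \<open>s + 1\<close> only the summand \<open>t = 0\<close> survives, a product of binomial
  coefficients \<open>C(m\<^sub>i, q\<^sub>i - r\<^sub>i)\<close>, which gives the lower bound.\<close>

lemma Vec_fun_upd: "n \<in> Vec s \<Longrightarrow> j \<in> {1..s} \<Longrightarrow> n(j := x) \<in> Vec s"
  by (auto simp: Vec_def)

lemma Vec_eqI: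
  assumes "n \<in> Vec s" "m \<in> Vec s" "\<And>i. i \<in> {1..s} \<Longrightarrow> n i = m i"
  shows "n = m"
proof
  fix i show "n i = m i"
    using assms by (cases "i \<in> {1..s}") (auto simp: Vec_def)
qed

lemma vle_fun_upd_dec:
  assumes "j \<in> {1..s}" "1 \<le> n j"
  shows "vle s m (n(j := n j - 1)) \<longleftrightarrow> vle s m n \<and> 1 \<le> n j - m j"
proof
  assume le: "vle s m (n(j := n j - 1))"
  have "m i \<le> n i" if "i \<in> {1..s}" for i
  proof -
    have "m i \<le> (n(j := n j - 1)) i" using le that by (simp add: vle_def)
    then show ?thesis by (cases "i = j") auto
  qed
  moreover have "m j \<le> (n(j := n j - 1)) j" using le assms(1) unfolding vle_def by blast
  ultimately show "vle s m n \<and> 1 \<le> n j - m j" using assms(2) by (auto simp: vle_def)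
next
  assume "vle s m n \<and> 1 \<le> n j - m j"
  then show "vle s m (n(j := n j - 1))" by (auto simp: vle_def)
qed

lemma vabs_fun_upd:
  assumes "j \<in> {1..s}"
  shows "vabs s (t(j := x)) = x + (\<Sum>i\<in>{1..s}-{j}. t i)"
  unfolding vabs_def using assms by (subst sum.remove[of _ j]) (auto intro: sum.cong)

lemma vabs_fun_upd_dec:
  assumes "j \<in> {1..s}" "1 \<le> t j"
  shows "vabs s (t(j := t j - 1)) = vabs s t - 1"
  using vabs_fun_upd[OF assms(1), of t "t j - 1"] vabs_fun_upd[OF assms(1), of t "t j"] assms(2)
  by simp

lemma vabs_pos:
  assumes "t \<in> Vec s" "t \<noteq> (\<lambda>_. 0)"
  shows "vabs s t \<ge> 1"
proof -
  have "\<exists>i\<in>{1..s}. t i \<noteq> 0"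
  proof (rule ccontr)
    assume "\<not> ?thesis"
    then have "t = (\<lambda>_. 0)" by (intro Vec_eqI[OF assms(1)]) (auto simp: Vec_def)
    with assms(2) show False ..
  qed
  then obtain i where "i \<in> {1..s}" "t i \<noteq> 0" by blast
  moreover from \<open>i \<in> {1..s}\<close> have "t i \<le> vabs s t"
    unfolding vabs_def by (intro member_le_sum) auto
  ultimately show ?thesis by linarith
qed

lemma prod_remove_cong:
  assumes "finite A" "j \<in> A" "\<And>i. i \<in> A \<Longrightarrow> i \<noteq> j \<Longrightarrow> f i = g i"
  shows "prod f A = f j * prod g (A - {j})"
proof -
  have "prod f (A - {j}) = prod g (A - {j})" by (rule prod.cong) (auto simp: assms(3))
  then show ?thesis by (simp add: prod.remove[OF assms(1,2)])
qed

definition vbox :: "nat \<Rightarrow> mindex \<Rightarrow> mindex set" where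
  "vbox s d = {t \<in> Vec s. vle s t d}"

lemma finite_vbox: "finite (vbox s d)"
proof -
  let ?ext = "\<lambda>f i. if i \<in> {1..s} then f i else 0"
  have "vbox s d \<subseteq> ?ext ` PiE {1..s} (\<lambda>i. {0..d i})"
  proof
    fix t assume t: "t \<in> vbox s d"
    then have "t = ?ext (restrict t {1..s})"
      by (auto simp: vbox_def Vec_def)
    moreover have "restrict t {1..s} \<in> PiE {1..s} (\<lambda>i. {0..d i})"
      using t by (auto simp: vbox_def vle_def)
    ultimately show "t \<in> ?ext ` PiE {1..s} (\<lambda>i. {0..d i})" by blast
  qed
  then show ?thesis by (rule finite_subset) (intro finite_imageI finite_PiE; simp)
qed

lemma zero_in_vbox: "(\<lambda>_. 0) \<in> vbox s d"
  by (simp add: vbox_def Vec_def vle_def)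

lemma vbox_le: "t \<in> vbox s d \<Longrightarrow> j \<in> {1..s} \<Longrightarrow> t j \<le> d j"
  by (simp add: vbox_def vle_def)

lemma vbox_mono: "vle s d e \<Longrightarrow> vbox s d \<subseteq> vbox s e"
  by (auto simp: vbox_def vle_def intro: order_trans)

lemma vbox_filter_less:
  assumes j: "j \<in> {1..s}" and dj: "1 \<le> d j"
  shows "{t \<in> vbox s d. t j < d j} = vbox s (d(j := d j - 1))"
proof (intro set_eqI iffI)
  fix t assume "t \<in> {t \<in> vbox s d. t j < d j}"
  then show "t \<in> vbox s (d(j := d j - 1))" by (auto simp: vbox_def vle_def)
next
  fix t assume t: "t \<in> vbox s (d(j := d j - 1))"
  then have "t i \<le> (d(j := d j - 1)) i" if "i \<in> {1..s}" for i
    using that by (simp add: vbox_def vle_def)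
  then have "t i \<le> d i" "t j < d j" if "i \<in> {1..s}" for i
    using that j dj by (fastforce split: if_splits)+
  then show "t \<in> {t \<in> vbox s d. t j < d j}" using t j by (simp add: vbox_def vle_def)
qed

lemma sum_vbox_fun_upd_dec:
  assumes j: "j \<in> {1..s}"
  shows "(\<Sum>t\<in>vbox s d. if 1 \<le> t j then G (t(j := t j - 1)) else 0)
     = (if 1 \<le> d j then (\<Sum>u\<in>vbox s (d(j := d j - 1)). G u) else 0)"
proof (cases "1 \<le> d j")
  case True
  have "(\<Sum>t\<in>vbox s d. if 1 \<le> t j then G (t(j := t j - 1)) else 0)
      = (\<Sum>t\<in>{t\<in>vbox s d. 1 \<le> t j}. G (t(j := t j - 1)))"
    by (rule sum.inter_filter[symmetric, OF finite_vbox])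
  also have "\<dots> = (\<Sum>u\<in>vbox s (d(j := d j - 1)). G u)"
    by (rule sum.reindex_bij_witness[where i = "\<lambda>u. u(j := u j + 1)" and j = "\<lambda>t. t(j := t j - 1)"])
      (use j True in \<open>auto simp: vbox_def vle_def Vec_def intro!: diff_le_mono\<close>)
  finally show ?thesis using True by simp
next
  case False
  then have "t \<in> vbox s d \<Longrightarrow> \<not> 1 \<le> t j" for t using vbox_le[OF _ j] by fastforce
  then show ?thesis using False by simp
qed

lemma mmult_finite_support:
  assumes "finite F" "F \<subseteq> Vec s" "\<And>l. l \<in> Vec s - F \<Longrightarrow> A n l = 0"
  shows "mmult s A B n m = (\<Sum>l\<in>F. A n l * B l m)"
proof -
  have "mmult s A B n m = infsum (\<lambda>l. A n l * B l m) F"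
    unfolding mmult_def by (rule infsum_cong_neutral) (use assms in auto)
  then show ?thesis using assms(1) by simp
qed

lemma mmult_A01_low:
  assumes n: "n \<in> Vec s" and i: "\<omega> 1 \<in> {1..s}"
  shows "mmult s (A01 s p \<omega>) B n m = p (\<omega> 1) * B n m
     + (if 1 \<le> n (\<omega> 1) then real (n (\<omega> 1)) * B (n(\<omega> 1 := n (\<omega> 1) - 1)) m else 0)"
proof -
  let ?i = "\<omega> 1"
  let ?F = "{n, n(?i := n ?i - 1)}"
  have F: "finite ?F" "?F \<subseteq> Vec s" using n i Vec_fun_upd by auto
  have "mmult s (A01 s p \<omega>) B n m = (\<Sum>l\<in>?F. A01 s p \<omega> n l * B l m)"
    by (rule mmult_finite_support[OF F]) (use i in \<open>auto simp: A01_def Idm_def Dm_def\<close>)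
  also have "\<dots> = (\<Sum>l\<in>?F. (if n = l then p ?i * B l m else 0)
      + (if l = n(?i := n ?i - 1) then (if 1 \<le> n ?i then real (n ?i) * B l m else 0) else 0))"
    by (rule sum.cong) (use i in \<open>auto simp: A01_def Idm_def Dm_def algebra_simps\<close>)
  also have "\<dots> = p ?i * B n m
      + (if 1 \<le> n ?i then real (n ?i) * B (n(?i := n ?i - 1)) m else 0)"
    by (simp only: sum.distrib sum.delta sum.delta' F(1)) simp
  finally show ?thesis .
qed

lemma mmult_A01_high:
  assumes n: "n \<in> Vec s" and i: "\<omega> 1 = s + 1"
  shows "mmult s (A01 s p \<omega>) B n m = p (s + 1) * B n m
     - (\<Sum>j=1..s. if 1 \<le> n j then real (n j) * B (n(j := n j - 1)) m else 0)"
proof -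
  let ?pred = "\<lambda>j. n(j := n j - 1)"
  let ?F = "insert n (?pred ` {1..s})"
  have F: "finite ?F" "?F \<subseteq> Vec s" using n Vec_fun_upd by auto
  have entry: "A01 s p \<omega> n l * B l m = (if n = l then p (s + 1) * B l m else 0)
      - (\<Sum>j=1..s. if l = ?pred j then (if 1 \<le> n j then real (n j) * B l m else 0) else 0)" for l
    using i by (auto simp: A01_def Idm_def Dm_def left_diff_distrib sum_distrib_right intro!: sum.cong)
  have "mmult s (A01 s p \<omega>) B n m = (\<Sum>l\<in>?F. A01 s p \<omega> n l * B l m)"
    by (rule mmult_finite_support[OF F])
      (use i in \<open>auto simp: A01_def Idm_def Dm_def intro!: sum.neutral\<close>)
  also have "\<dots> = p (s + 1) * B n m
      - (\<Sum>j=1..s. if 1 \<le> n j then real (n j) * B (?pred j) m else 0)"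
    unfolding entry sum_subtractf sum.delta[OF F(1)] by (subst sum.swap) (simp del: One_nat_def)
  finally show ?thesis .
qed

lemma p_pos: "valid_p s p \<Longrightarrow> i \<in> {1..s + 1} \<Longrightarrow> p i > 0"
  by (cases "i = s + 1") (auto simp: valid_p_def)

lemma valid_omega_shift: "valid_omega s \<omega> \<Longrightarrow> valid_omega s (shift \<omega>)"
  by (auto simp: valid_omega_def shift_def)

lemma prod_p_pos:
  assumes "valid_p s p" "valid_omega s \<omega>"
  shows "(\<Prod>j=1..k. p (\<omega> j)) > 0"
proof (rule prod_pos)
  fix j assume "j \<in> {1..k}"
  then have "\<omega> j \<in> {1..s + 1}" using assms(2) by (simp add: valid_omega_def)
  then show "p (\<omega> j) > 0" by (rule p_pos[OF assms(1)])
qed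

lemma prod_p_Suc: "(\<Prod>j=1..Suc k. p (\<omega> j)) = p (\<omega> 1) * (\<Prod>j=1..k. p (shift \<omega> j))"
proof -
  have "(\<Prod>j=Suc 1..Suc k. p (\<omega> j)) = (\<Prod>j=1..k. p (shift \<omega> j))"
    by (subst prod.shift_bounds_cl_Suc_ivl) (simp add: shift_def)
  moreover have "(\<Prod>j=1..Suc k. p (\<omega> j)) = p (\<omega> 1) * (\<Prod>j=Suc 1..Suc k. p (\<omega> j))"
    by (rule prod.atLeast_Suc_atMost) simp
  ultimately show ?thesis by simp
qed

lemma cnt_Suc: "cnt \<omega> (Suc k) = (cnt (shift \<omega>) k)(\<omega> 1 := cnt (shift \<omega>) k (\<omega> 1) + 1)"
proof
  fix i
  let ?S = "{j \<in> {1..k}. shift \<omega> j = i}"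
  have "{1..Suc k} = insert 1 (Suc ` {1..k})"
    by (simp add: image_Suc_atLeastAtMost atLeastAtMost_insertL)
  moreover have "{j \<in> Suc ` {1..k}. \<omega> j = i} = Suc ` ?S"
    by (auto simp: shift_def simp del: image_Suc_atLeastAtMost)
  ultimately have S: "{j \<in> {1..Suc k}. \<omega> j = i}
      = (if \<omega> 1 = i then insert 1 (Suc ` ?S) else Suc ` ?S)"
    by auto
  have "card {j \<in> {1..Suc k}. \<omega> j = i} = card ?S + (if \<omega> 1 = i then 1 else 0)"
  proof -
    have "finite (Suc ` ?S)" "1 \<notin> Suc ` ?S" by auto
    then show ?thesis unfolding S by (simp add: card_image)
  qed
  then show "cnt \<omega> (Suc k) i = ((cnt (shift \<omega>) k)(\<omega> 1 := cnt (shift \<omega>) k (\<omega> 1) + 1)) i"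
    unfolding cnt_def by (simp add: card_image)
qed

lemma cnt_le: "cnt \<omega> k j \<le> k"
proof -
  have "cnt \<omega> k j \<le> card {1..k}" unfolding cnt_def by (rule card_mono) auto
  then show ?thesis by simp
qed

lemma Am_Suc_low:
  assumes vp: "valid_p s p" and vo: "valid_omega s \<omega>" and n: "n \<in> Vec s" and i: "\<omega> 1 \<in> {1..s}"
  shows "Am s p \<omega> (Suc k) n m = Am s p (shift \<omega>) k n m
     + (if 1 \<le> n (\<omega> 1)
        then real (n (\<omega> 1)) / p (\<omega> 1) * Am s p (shift \<omega>) k (n(\<omega> 1 := n (\<omega> 1) - 1)) m else 0)"
proof -
  define P where "P = (\<Prod>j=1..k. p (shift \<omega> j))"
  have P: "P > 0" unfolding P_def by (rule prod_p_pos[OF vp valid_omega_shift[OF vo]])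
  have pi: "p (\<omega> 1) > 0" using i by (intro p_pos[OF vp]) auto
  have A0: "A0 s p (shift \<omega>) k x m = Am s p (shift \<omega>) k x m * P" for x
    unfolding Am_def P_def[symmetric] using P by simp
  show ?thesis
    unfolding Am_def[of s p \<omega>] prod_p_Suc A0.simps mmult_A01_low[where \<omega> = \<omega>, OF n i] A0
      P_def[symmetric]
    using P pi by (auto simp: field_simps)
qed

lemma Am_Suc_high:
  assumes vp: "valid_p s p" and vo: "valid_omega s \<omega>" and n: "n \<in> Vec s" and i: "\<omega> 1 = s + 1"
  shows "Am s p \<omega> (Suc k) n m = Am s p (shift \<omega>) k n m
     - 1 / p (s + 1) * (\<Sum>j=1..s. if 1 \<le> n j then real (n j) * Am s p (shift \<omega>) k (n(j := n j - 1)) m else 0)"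
proof -
  define P where "P = (\<Prod>j=1..k. p (shift \<omega> j))"
  have P: "P > 0" unfolding P_def by (rule prod_p_pos[OF vp valid_omega_shift[OF vo]])
  have pi: "p (s + 1) > 0" by (intro p_pos[OF vp]) auto
  have A0: "A0 s p (shift \<omega>) k x m = Am s p (shift \<omega>) k x m * P" for x
    unfolding Am_def P_def[symmetric] using P by simp
  have "(\<Sum>j=1..s. if 1 \<le> n j then real (n j) * (Am s p (shift \<omega>) k (n(j := n j - 1)) m * P) else 0)
     = (\<Sum>j=1..s. if 1 \<le> n j then real (n j) * Am s p (shift \<omega>) k (n(j := n j - 1)) m else 0) * P"
    by (subst sum_distrib_right) (rule sum.cong; simp)
  then show ?thesis
    unfolding Am_def[of s p \<omega>] prod_p_Suc A0.simps mmult_A01_high[where \<omega> = \<omega>, OF n i] A0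
      P_def[symmetric] i
    using P pi by (auto simp: field_simps)
qed

definition falling_fact :: "nat \<Rightarrow> nat \<Rightarrow> real" where
  "falling_fact n k = real (n choose k) * fact k"

lemma falling_fact_0 [simp]: "falling_fact n 0 = 1"
  by (simp add: falling_fact_def)

lemma falling_fact_Suc: "falling_fact (Suc n) k = falling_fact n k + real k * falling_fact n (k - 1)"
  by (cases k) (simp_all add: falling_fact_def algebra_simps)

text \<open>\<open>gf_coeff s p c d\<close> is the coefficient of \<open>x\<^sup>d\<close> in
  \<open>\<Prod>i\<le>s. (1 + x\<^sub>i/p\<^sub>i)\<^bsup>c\<^sub>i\<^esup> \<cdot> (1 - (x\<^sub>1 + \<dots> + x\<^sub>s)/p\<^sub>s\<^sub>+\<^sub>1)\<^bsup>c\<^sub>s\<^sub>+\<^sub>1\<^esup>\<close>;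
  the summation index \<open>t\<close> is the multi-exponent taken from the last factor.\<close>

definition gf_factor :: "nat \<Rightarrow> (nat \<Rightarrow> real) \<Rightarrow> (nat \<Rightarrow> nat) \<Rightarrow> mindex \<Rightarrow> mindex \<Rightarrow> real" where
  "gf_factor s p c d t = (\<Prod>i=1..s. real (c i choose (d i - t i)) * (1 / p i) ^ (d i - t i) / fact (t i))"

definition gf_term :: "nat \<Rightarrow> (nat \<Rightarrow> real) \<Rightarrow> (nat \<Rightarrow> nat) \<Rightarrow> mindex \<Rightarrow> mindex \<Rightarrow> real" where
  "gf_term s p c d t = (-1) ^ vabs s t * (1 / p (s + 1)) ^ vabs s t
     * falling_fact (c (s + 1)) (vabs s t) * gf_factor s p c d t"

definition gf_coeff :: "nat \<Rightarrow> (nat \<Rightarrow> real) \<Rightarrow> (nat \<Rightarrow> nat) \<Rightarrow> mindex \<Rightarrow> real" where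
  "gf_coeff s p c d = (\<Sum>t\<in>vbox s d. gf_term s p c d t)"

lemma gf_factor_Suc_low:
  assumes j: "j \<in> {1..s}" and t: "t j \<le> d j"
  shows "gf_factor s p (c(j := c j + 1)) d t = gf_factor s p c d t
     + (if t j < d j then 1 / p j * gf_factor s p c (d(j := d j - 1)) t else 0)"
proof -
  let ?R = "\<Prod>i\<in>{1..s}-{j}. real (c i choose (d i - t i)) * (1 / p i) ^ (d i - t i) / fact (t i)"
  have new: "gf_factor s p (c(j := c j + 1)) d t
      = real ((c j + 1) choose (d j - t j)) * (1 / p j) ^ (d j - t j) / fact (t j) * ?R"
    unfolding gf_factor_def using j by (subst prod_remove_cong[of _ j]) auto
  have old: "gf_factor s p c d t = real (c j choose (d j - t j)) * (1 / p j) ^ (d j - t j) / fact (t j) * ?R"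
    unfolding gf_factor_def using j by (subst prod_remove_cong[of _ j]) auto
  have lower: "gf_factor s p c (d(j := d j - 1)) t
      = real (c j choose (d j - 1 - t j)) * (1 / p j) ^ (d j - 1 - t j) / fact (t j) * ?R"
    unfolding gf_factor_def using j by (subst prod_remove_cong[of _ j]) auto
  show ?thesis
  proof (cases "t j < d j")
    case True
    then obtain a where "d j - t j = Suc a" "d j - 1 - t j = a"
      by (metis Suc_diff_Suc diff_Suc_1 diff_commute Suc_pred' zero_less_diff)
    then show ?thesis unfolding new old lower using True by (simp add: algebra_simps add_divide_distrib)
  next
    case False
    then show ?thesis unfolding new old using t by simp
  qed
qed

lemma gf_term_Suc_low:
  assumes j: "j \<in> {1..s}" and t: "t j \<le> d j"
  shows "gf_term s p (c(j := c j + 1)) d t = gf_term s p c d t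
     + (if t j < d j then 1 / p j * gf_term s p c (d(j := d j - 1)) t else 0)"
  using j unfolding gf_term_def gf_factor_Suc_low[where t = t and d = d, OF j t] by (auto simp: distrib_left)

lemma gf_coeff_Suc_low:
  assumes j: "j \<in> {1..s}"
  shows "gf_coeff s p (c(j := c j + 1)) d = gf_coeff s p c d
     + (if 1 \<le> d j then 1 / p j * gf_coeff s p c (d(j := d j - 1)) else 0)"
proof -
  have "gf_coeff s p (c(j := c j + 1)) d = gf_coeff s p c d
     + (\<Sum>t\<in>vbox s d. if t j < d j then 1 / p j * gf_term s p c (d(j := d j - 1)) t else 0)"
    unfolding gf_coeff_def sum.distrib[symmetric]
    by (intro sum.cong refl gf_term_Suc_low[OF j vbox_le[OF _ j]])
  also have "(\<Sum>t\<in>vbox s d. if t j < d j then 1 / p j * gf_term s p c (d(j := d j - 1)) t else 0)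
     = (\<Sum>t\<in>{t \<in> vbox s d. t j < d j}. 1 / p j * gf_term s p c (d(j := d j - 1)) t)"
    by (rule sum.inter_filter[symmetric, OF finite_vbox])
  also have "\<dots> = (if 1 \<le> d j then 1 / p j * gf_coeff s p c (d(j := d j - 1)) else 0)"
    by (cases "1 \<le> d j") (simp_all add: vbox_filter_less[OF j] gf_coeff_def sum_distrib_left)
  finally show ?thesis .
qed

lemma gf_factor_dec:
  assumes j: "j \<in> {1..s}" and tj: "1 \<le> t j"
  shows "gf_factor s p c (d(j := d j - 1)) (t(j := t j - 1)) = real (t j) * gf_factor s p c d t"
proof -
  let ?R = "\<Prod>i\<in>{1..s}-{j}. real (c i choose (d i - t i)) * (1 / p i) ^ (d i - t i) / fact (t i)"
  have "gf_factor s p c (d(j := d j - 1)) (t(j := t j - 1))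
      = real (c j choose (d j - t j)) * (1 / p j) ^ (d j - t j) / fact (t j - 1) * ?R"
    unfolding gf_factor_def using j tj by (subst prod_remove_cong[of _ j]) auto
  moreover have "gf_factor s p c d t = real (c j choose (d j - t j)) * (1 / p j) ^ (d j - t j) / fact (t j) * ?R"
    unfolding gf_factor_def using j by (subst prod_remove_cong[of _ j]) auto
  moreover have "fact (t j) = real (t j) * (fact (t j - 1) :: real)"
    using tj by (intro fact_reduce) simp
  ultimately show ?thesis using tj by simp
qed

lemma gf_factor_fun_upd_high: "gf_factor s p (c(s + 1 := x)) d t = gf_factor s p c d t"
  unfolding gf_factor_def by (rule prod.cong) auto

lemma gf_term_Suc_high:
  "gf_term s p (c(s + 1 := c (s + 1) + 1)) d t = gf_term s p c d t
     - 1 / p (s + 1) * (\<Sum>j=1..s. if 1 \<le> t j then gf_term s p c (d(j := d j - 1)) (t(j := t j - 1)) else 0)"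
proof -
  define T where "T = vabs s t"
  define q where "q = 1 / p (s + 1)"
  define C where "C = c (s + 1)"
  define X where "X = gf_factor s p c d t"
  define lower where "lower = (-1) ^ (T - 1) * q ^ (T - 1) * falling_fact C (T - 1) * X"
  have "(if 1 \<le> t j then gf_term s p c (d(j := d j - 1)) (t(j := t j - 1)) else 0) = real (t j) * lower"
    if j: "j \<in> {1..s}" for j
    using vabs_fun_upd_dec[OF j] gf_factor_dec[OF j]
    by (auto simp: gf_term_def lower_def T_def q_def C_def X_def)
  then have S: "(\<Sum>j=1..s. if 1 \<le> t j then gf_term s p c (d(j := d j - 1)) (t(j := t j - 1)) else 0)
      = real T * lower"
    unfolding T_def vabs_def by (simp add: sum_distrib_right)
  have "gf_term s p (c(s + 1 := c (s + 1) + 1)) d t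
      = (-1) ^ T * q ^ T * falling_fact C T * X + (-1) ^ T * q ^ T * (real T * falling_fact C (T - 1)) * X"
    unfolding gf_term_def gf_factor_fun_upd_high
    by (simp add: falling_fact_Suc T_def q_def C_def X_def algebra_simps)
  also have "\<dots> = gf_term s p c d t - q * (real T * lower)"
    unfolding lower_def by (cases T) (simp_all add: gf_term_def T_def q_def C_def X_def)
  finally show ?thesis unfolding S q_def .
qed

lemma gf_coeff_Suc_high:
  "gf_coeff s p (c(s + 1 := c (s + 1) + 1)) d = gf_coeff s p c d
     - 1 / p (s + 1) * (\<Sum>j=1..s. if 1 \<le> d j then gf_coeff s p c (d(j := d j - 1)) else 0)"
proof -
  have "gf_coeff s p (c(s + 1 := c (s + 1) + 1)) d = gf_coeff s p c d - 1 / p (s + 1) *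
      (\<Sum>j=1..s. \<Sum>t\<in>vbox s d. if 1 \<le> t j then gf_term s p c (d(j := d j - 1)) (t(j := t j - 1)) else 0)"
    unfolding gf_coeff_def gf_term_Suc_high sum_subtractf sum_distrib_left by (subst sum.swap) simp
  also have "\<dots> = gf_coeff s p c d
     - 1 / p (s + 1) * (\<Sum>j=1..s. if 1 \<le> d j then gf_coeff s p c (d(j := d j - 1)) else 0)"
    unfolding gf_coeff_def
    by (intro arg_cong2[where f = "(-)"] arg_cong2[where f = "(*)"] refl sum.cong sum_vbox_fun_upd_dec)
  finally show ?thesis .
qed

lemma gf_coeff_no_high:
  assumes "c (s + 1) = 0"
  shows "gf_coeff s p c d = gf_factor s p c d (\<lambda>_. 0)"
proof -
  have "gf_term s p c d t = 0" if "t \<in> vbox s d - {\<lambda>_. 0}" for t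
    using vabs_pos[of t s] that assms by (auto simp: gf_term_def falling_fact_def vbox_def)
  then have "gf_coeff s p c d = gf_term s p c d (\<lambda>_. 0)"
    unfolding gf_coeff_def by (subst sum.remove[OF finite_vbox zero_in_vbox]) simp
  then show ?thesis by (simp add: gf_term_def vabs_def)
qed

lemma gf_coeff_zero:
  "gf_coeff s p (\<lambda>_. 0) d = (if \<forall>i\<in>{1..s}. d i = 0 then 1 else 0)"
proof -
  have "gf_coeff s p (\<lambda>_. 0) d = (\<Prod>i=1..s. if d i = 0 then 1 else 0)"
    unfolding gf_coeff_no_high[of "\<lambda>_. 0", OF refl] gf_factor_def by (intro prod.cong) auto
  then show ?thesis by (auto intro: prod_zero)
qed

text \<open>\<open>fact_ratio s n m\<close> is the \<open>(n, m)\<close> entry of \<open>D\<^sub>1\<^bsup>n\<^sub>1-m\<^sub>1\<^esup>\<cdots>D\<^sub>s\<^bsup>n\<^sub>s-m\<^sub>s\<^esup>\<close>.\<close>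

definition fact_ratio :: "nat \<Rightarrow> mindex \<Rightarrow> mindex \<Rightarrow> real" where
  "fact_ratio s n m = (\<Prod>i=1..s. fact (n i) / fact (m i))"

lemma fact_ratio_dec:
  assumes j: "j \<in> {1..s}" and nj: "1 \<le> n j"
  shows "real (n j) * fact_ratio s (n(j := n j - 1)) m = fact_ratio s n m"
proof -
  let ?R = "\<Prod>i\<in>{1..s}-{j}. fact (n i) / fact (m i) :: real"
  have "fact_ratio s (n(j := n j - 1)) m = fact (n j - 1) / fact (m j) * ?R"
    unfolding fact_ratio_def using j by (subst prod_remove_cong[of _ j]) auto
  moreover have "fact_ratio s n m = fact (n j) / fact (m j) * ?R"
    unfolding fact_ratio_def using j by (subst prod_remove_cong[of _ j]) auto
  moreover have "fact (n j) = real (n j) * (fact (n j - 1) :: real)"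
    using nj by (intro fact_reduce) simp
  ultimately show ?thesis by simp
qed

definition Aclosed :: "nat \<Rightarrow> (nat \<Rightarrow> real) \<Rightarrow> (nat \<Rightarrow> nat) \<Rightarrow> mindex \<Rightarrow> mindex \<Rightarrow> real" where
  "Aclosed s p c n m = (if vle s m n then fact_ratio s n m * gf_coeff s p c (\<lambda>i. n i - m i) else 0)"

lemma Aclosed_dec:
  assumes j: "j \<in> {1..s}" and nj: "1 \<le> n j"
  shows "real (n j) * Aclosed s p c (n(j := n j - 1)) m =
    (if vle s m n \<and> 1 \<le> n j - m j
     then fact_ratio s n m * gf_coeff s p c ((\<lambda>i. n i - m i)(j := n j - m j - 1)) else 0)"
proof -
  have "(\<lambda>i. (n(j := n j - 1)) i - m i) = (\<lambda>i. n i - m i)(j := n j - m j - 1)"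
    by auto
  then show ?thesis
    unfolding Aclosed_def vle_fun_upd_dec[where n = n, OF j nj]
    using fact_ratio_dec[where n = n, OF j nj, of m] by auto
qed

lemma Aclosed_Suc_low:
  assumes i: "i \<in> {1..s}"
  shows "Aclosed s p (c(i := c i + 1)) n m = Aclosed s p c n m
    + (if 1 \<le> n i then real (n i) / p i * Aclosed s p c (n(i := n i - 1)) m else 0)"
proof (cases "vle s m n")
  case True
  have "(if 1 \<le> n i then real (n i) / p i * Aclosed s p c (n(i := n i - 1)) m else 0)
     = fact_ratio s n m * (if 1 \<le> n i - m i
        then 1 / p i * gf_coeff s p c ((\<lambda>i. n i - m i)(i := n i - m i - 1)) else 0)"
    using Aclosed_dec[OF i, of n p c m] True by auto
  then show ?thesis
    unfolding Aclosed_def gf_coeff_Suc_low[OF i] using True by (simp add: distrib_left)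
next
  case False
  then show ?thesis using vle_fun_upd_dec[OF i] by (simp add: Aclosed_def)
qed

lemma Aclosed_Suc_high:
  "Aclosed s p (c(s + 1 := c (s + 1) + 1)) n m = Aclosed s p c n m
    - 1 / p (s + 1) * (\<Sum>j=1..s. if 1 \<le> n j then real (n j) * Aclosed s p c (n(j := n j - 1)) m else 0)"
proof (cases "vle s m n")
  case True
  have "(\<Sum>j=1..s. if 1 \<le> n j then real (n j) * Aclosed s p c (n(j := n j - 1)) m else 0)
     = fact_ratio s n m * (\<Sum>j=1..s. if 1 \<le> n j - m j
        then gf_coeff s p c ((\<lambda>i. n i - m i)(j := n j - m j - 1)) else 0)"
    unfolding sum_distrib_left using Aclosed_dec[of _ s n p c m] True by (intro sum.cong) auto
  then show ?thesis
    unfolding Aclosed_def gf_coeff_Suc_high using True by (simp add: right_diff_distrib)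
next
  case False
  then have zero: "Aclosed s p c (n(j := n j - 1)) m = 0" if "j \<in> {1..s}" "1 \<le> n j" for j
    using vle_fun_upd_dec[where n = n, OF that] by (simp add: Aclosed_def)
  have "(\<Sum>j=1..s. if 1 \<le> n j then real (n j) * Aclosed s p c (n(j := n j - 1)) m else 0) = 0"
    by (intro sum.neutral ballI) (simp add: zero del: One_nat_def)
  then show ?thesis using False by (simp add: Aclosed_def)
qed

lemma Am_0_eq_Aclosed:
  assumes n: "n \<in> Vec s" and m: "m \<in> Vec s"
  shows "Am s p \<omega> 0 n m = Aclosed s p (cnt \<omega> 0) n m"
proof -
  have "cnt \<omega> 0 = (\<lambda>_. 0)" by (simp add: cnt_def fun_eq_iff)
  moreover have "vle s m n \<and> (\<forall>i\<in>{1..s}. n i - m i = 0) \<longleftrightarrow> n = m"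
  proof
    assume "vle s m n \<and> (\<forall>i\<in>{1..s}. n i - m i = 0)"
    then show "n = m" by (intro Vec_eqI[OF n m]) (force simp: vle_def)
  qed (simp add: vle_def)
  ultimately show ?thesis
    by (auto simp: Am_def Idm_def Aclosed_def gf_coeff_zero fact_ratio_def)
qed

lemma Am_eq_Aclosed:
  assumes vp: "valid_p s p"
  shows "valid_omega s \<omega> \<Longrightarrow> n \<in> Vec s \<Longrightarrow> m \<in> Vec s \<Longrightarrow> Am s p \<omega> k n m = Aclosed s p (cnt \<omega> k) n m"
proof (induction k arbitrary: \<omega> n)
  case 0
  then show ?case by (simp add: Am_0_eq_Aclosed)
next
  case (Suc k)
  let ?c = "cnt (shift \<omega>) k"
  have IH: "Am s p (shift \<omega>) k x m = Aclosed s p ?c x m" if "x \<in> Vec s" for x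
    using Suc.IH[OF valid_omega_shift[OF Suc.prems(1)] that Suc.prems(3)] .
  have "\<omega> 1 \<in> {1..s + 1}" using Suc.prems(1) by (simp add: valid_omega_def)
  then consider "\<omega> 1 \<in> {1..s}" | "\<omega> 1 = s + 1" by fastforce
  then show ?case
  proof cases
    case 1
    show ?thesis
      unfolding Am_Suc_low[OF vp Suc.prems(1,2) 1] IH[OF Suc.prems(2)]
        IH[OF Vec_fun_upd[OF Suc.prems(2) 1]] cnt_Suc Aclosed_Suc_low[OF 1] ..
  next
    case 2
    have "(\<Sum>j=1..s. if 1 \<le> n j then real (n j) * Am s p (shift \<omega>) k (n(j := n j - 1)) m else 0)
        = (\<Sum>j=1..s. if 1 \<le> n j then real (n j) * Aclosed s p ?c (n(j := n j - 1)) m else 0)"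
      using IH[OF Vec_fun_upd[OF Suc.prems(2)]] by (intro sum.cong) simp_all
    then show ?thesis
      unfolding Am_Suc_high[OF vp Suc.prems(1,2) 2] IH[OF Suc.prems(2)] cnt_Suc 2 Aclosed_Suc_high
      by simp
  qed
qed

lemma Tset_subset_vbox:
  assumes "vle s r q"
  shows "Tset s \<omega> k q r \<subseteq> vbox s (\<lambda>i. q i - r i)"
  using assms by (force simp: Tset_def vbox_def vle_def)

lemma gf_term_outside_Tset:
  assumes rq: "vle s r q" and t: "t \<in> vbox s (\<lambda>i. q i - r i) - Tset s \<omega> k q r"
  shows "gf_term s p (cnt \<omega> k) (\<lambda>i. q i - r i) t = 0"
proof -
  let ?c = "cnt \<omega> k"
  have rqi: "\<forall>i\<in>{1..s}. r i \<le> q i" and tle: "\<forall>i\<in>{1..s}. t i \<le> q i - r i"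
    using rq t by (auto simp: vle_def vbox_def)
  have "\<not> ((\<forall>i\<in>{1..s}. int (q i) - int (r i) - int (?c i) \<le> int (t i) \<and> int (t i) \<le> int (q i) - int (r i))
      \<and> vabs s t \<le> ?c (s + 1))"
    using t by (auto simp: Tset_def vbox_def)
  moreover have "\<forall>i\<in>{1..s}. int (t i) \<le> int (q i) - int (r i)"
    using rqi tle by force
  ultimately have "(\<exists>i\<in>{1..s}. q i - r i - t i > ?c i) \<or> vabs s t > ?c (s + 1)"
    using rqi by force
  then show ?thesis
  proof
    assume "\<exists>i\<in>{1..s}. q i - r i - t i > ?c i"
    then have "gf_factor s p ?c (\<lambda>i. q i - r i) t = 0"
      unfolding gf_factor_def by (auto intro: prod_zero simp: binomial_eq_0)
    then show ?thesis by (simp add: gf_term_def)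
  next
    assume "vabs s t > ?c (s + 1)"
    then show ?thesis by (simp add: gf_term_def falling_fact_def binomial_eq_0)
  qed
qed

lemma Aformula_summand:
  assumes vp: "valid_p s p" and rq: "vle s r q" and t: "t \<in> Tset s \<omega> k q r"
  shows "fact_ratio s q r * gf_term s p (cnt \<omega> k) (\<lambda>i. q i - r i) t =
       (-1) ^ vabs s t * (1 / p (s + 1)) ^ vabs s t
       * fact (cnt \<omega> k (s + 1)) / fact (cnt \<omega> k (s + 1) - vabs s t)
       * (\<Prod>i=1..s.
           fact (cnt \<omega> k i) * fact (q i) /
           (fact (cnt \<omega> k i - (q i - r i - t i)) * fact (q i - r i - t i) * fact (t i)
             * fact (r i) * p i ^ (q i - r i - t i)))"
proof -
  let ?c = "cnt \<omega> k"
  have "q i - r i - t i \<le> ?c i" if "i \<in> {1..s}" for i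
    using t rq that by (force simp: Tset_def vle_def)
  moreover have "p i \<noteq> 0" if "i \<in> {1..s}" for i
    using p_pos[OF vp, of i] that by auto
  ultimately have "fact_ratio s q r * gf_factor s p ?c (\<lambda>i. q i - r i) t =
      (\<Prod>i=1..s. fact (?c i) * fact (q i) /
           (fact (?c i - (q i - r i - t i)) * fact (q i - r i - t i) * fact (t i)
             * fact (r i) * p i ^ (q i - r i - t i)))"
    unfolding fact_ratio_def gf_factor_def prod.distrib[symmetric]
    by (intro prod.cong refl) (simp add: binomial_fact field_simps)
  moreover have "falling_fact (?c (s + 1)) (vabs s t) = fact (?c (s + 1)) / fact (?c (s + 1) - vabs s t)"
    using t by (simp add: Tset_def falling_fact_def binomial_fact)
  ultimately show ?thesis by (simp add: gf_term_def algebra_simps)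
qed

lemma Am_eq_Aformula:
  assumes vp: "valid_p s p" and vo: "valid_omega s \<omega>" and q: "q \<in> Vec s" and r: "r \<in> Vec s"
    and rq: "vle s r q"
  shows "Am s p \<omega> k q r = Aformula s p \<omega> k q r"
proof -
  have "Am s p \<omega> k q r = (\<Sum>t\<in>vbox s (\<lambda>i. q i - r i). fact_ratio s q r * gf_term s p (cnt \<omega> k) (\<lambda>i. q i - r i) t)"
    using Am_eq_Aclosed[OF vp vo q r] rq by (simp add: Aclosed_def gf_coeff_def sum_distrib_left)
  also have "\<dots> = (\<Sum>t\<in>Tset s \<omega> k q r. fact_ratio s q r * gf_term s p (cnt \<omega> k) (\<lambda>i. q i - r i) t)"
    by (rule sum.mono_neutral_right[OF finite_vbox Tset_subset_vbox[OF rq]])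
      (simp add: gf_term_outside_Tset[OF rq])
  also have "\<dots> = Aformula s p \<omega> k q r"
    unfolding Aformula_def by (intro sum.cong refl Aformula_summand[OF vp rq])
  finally show ?thesis .
qed

lemma binomial_le_max1_pow: "real (n choose k) \<le> real (max 1 n) ^ k"
proof (cases "k \<le> n")
  case True
  then have "real (n choose k) \<le> real n ^ k"
    by (metis binomial_le_pow of_nat_le_iff of_nat_power)
  also have "\<dots> \<le> real (max 1 n) ^ k" by (rule power_mono) auto
  finally show ?thesis .
qed (simp add: binomial_eq_0)

lemma falling_fact_le_max1_pow: "falling_fact n k \<le> real (max 1 n) ^ k"
proof -
  have "falling_fact n k \<le> real n ^ k"
    unfolding falling_fact_def
    by (metis binomial_fact_pow of_nat_fact of_nat_le_iff of_nat_mult of_nat_power)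
  also have "\<dots> \<le> real (max 1 n) ^ k" by (rule power_mono) auto
  finally show ?thesis .
qed

lemma one_le_inverse_p:
  assumes vp: "valid_p s p" and i: "i \<in> {1..s + 1}"
  shows "1 \<le> 1 / p i"
proof -
  have "(\<Sum>i=1..s. p i) \<ge> 0"
    using vp by (intro sum_nonneg) (auto simp: valid_p_def less_imp_le)
  then have "p i \<le> 1"
    using vp i by (cases "i = s + 1") (auto simp: valid_p_def less_imp_le)
  then show ?thesis using p_pos[OF vp i] by simp
qed

definition p_weight :: "nat \<Rightarrow> (nat \<Rightarrow> real) \<Rightarrow> mindex \<Rightarrow> real" where
  "p_weight s p q = (1 / p (s + 1)) ^ vabs s q * (\<Prod>i=1..s. (1 / p i) ^ q i)"

lemma p_weight_nonneg: "valid_p s p \<Longrightarrow> 0 \<le> p_weight s p q"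
  unfolding p_weight_def using p_pos by (auto intro!: mult_nonneg_nonneg prod_nonneg simp: less_imp_le)

definition counts_monomial :: "nat \<Rightarrow> (nat \<Rightarrow> nat) \<Rightarrow> mindex \<Rightarrow> mindex \<Rightarrow> real" where
  "counts_monomial s c d t =
     (\<Prod>i=1..s. real (max 1 (c i)) ^ (d i - t i)) * real (max 1 (c (s + 1))) ^ vabs s t"

lemma counts_monomial_nonneg: "0 \<le> counts_monomial s c d t"
  unfolding counts_monomial_def by (intro mult_nonneg_nonneg prod_nonneg) auto

lemma gf_factor_abs_le:
  assumes vp: "valid_p s p" and t: "t \<in> vbox s d" and dq: "vle s d q"
  shows "\<bar>gf_factor s p c d t\<bar> \<le> (\<Prod>i=1..s. (1 / p i) ^ q i) * (\<Prod>i=1..s. real (max 1 (c i)) ^ (d i - t i))"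
  unfolding gf_factor_def abs_prod prod.distrib[symmetric]
proof (intro prod_mono conjI)
  fix i assume i: "i \<in> {1..s}"
  let ?e = "d i - t i"
  let ?x = "real (c i choose ?e) * (1 / p i) ^ ?e"
  have pi: "p i > 0" using p_pos[OF vp, of i] i by simp
  have "\<bar>?x / fact (t i)\<bar> = ?x / fact (t i)"
    using pi by simp
  also have "\<dots> \<le> ?x / 1"
    using pi by (intro divide_left_mono) auto
  also have "\<dots> = ?x" by simp
  also have "\<dots> \<le> real (max 1 (c i)) ^ ?e * (1 / p i) ^ q i"
  proof -
    have "d i \<le> q i" using dq i unfolding vle_def by blast
    then show ?thesis
      using one_le_inverse_p[OF vp, of i] i pi
      by (intro mult_mono binomial_le_max1_pow power_increasing) auto
  qed
  finally show "\<bar>?x / fact (t i)\<bar> \<le> (1 / p i) ^ q i * real (max 1 (c i)) ^ ?e"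
    by (simp add: mult.commute)
qed simp

lemma gf_term_abs_le:
  assumes vp: "valid_p s p" and t: "t \<in> vbox s d" and dq: "vle s d q"
  shows "\<bar>gf_term s p c d t\<bar> \<le> p_weight s p q * counts_monomial s c d t"
proof -
  have pos: "p (s + 1) > 0" using p_pos[OF vp, of "s + 1"] by simp
  have "vabs s t \<le> vabs s q"
    unfolding vabs_def using t dq by (intro sum_mono) (force simp: vbox_def vle_def)
  then have pow: "(1 / p (s + 1)) ^ vabs s t \<le> (1 / p (s + 1)) ^ vabs s q"
    using one_le_inverse_p[OF vp, of "s + 1"] by (intro power_increasing) auto
  have "\<bar>gf_term s p c d t\<bar>
      = (1 / p (s + 1)) ^ vabs s t * falling_fact (c (s + 1)) (vabs s t) * \<bar>gf_factor s p c d t\<bar>"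
    unfolding gf_term_def abs_mult using pos by (simp add: power_abs falling_fact_def)
  also have "\<dots> \<le> (1 / p (s + 1)) ^ vabs s q * real (max 1 (c (s + 1))) ^ vabs s t
      * ((\<Prod>i=1..s. (1 / p i) ^ q i) * (\<Prod>i=1..s. real (max 1 (c i)) ^ (d i - t i)))"
    using pos
    by (intro mult_mono[OF mult_mono[OF pow falling_fact_le_max1_pow] gf_factor_abs_le[OF vp t dq]])
      (auto simp: falling_fact_def)
  also have "\<dots> = p_weight s p q * counts_monomial s c d t"
    by (simp add: p_weight_def counts_monomial_def algebra_simps)
  finally show ?thesis .
qed

lemma gf_coeff_abs_le:
  assumes vp: "valid_p s p" and dq: "vle s d q"
    and B: "\<And>t. t \<in> vbox s d \<Longrightarrow> counts_monomial s c d t \<le> B"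
  shows "\<bar>gf_coeff s p c d\<bar> \<le> real (card (vbox s q)) * p_weight s p q * B"
proof -
  have B0: "0 \<le> B" using B[OF zero_in_vbox] counts_monomial_nonneg by (rule order_trans[rotated])
  have "\<bar>gf_coeff s p c d\<bar> \<le> (\<Sum>t\<in>vbox s d. \<bar>gf_term s p c d t\<bar>)"
    unfolding gf_coeff_def by (rule sum_abs)
  also have "\<dots> \<le> real (card (vbox s d)) * (p_weight s p q * B)"
    using gf_term_abs_le[OF vp _ dq] B p_weight_nonneg[OF vp]
    by (intro sum_bounded_above) (meson mult_left_mono order_trans)
  also have "\<dots> \<le> real (card (vbox s q)) * (p_weight s p q * B)"
    using card_mono[OF finite_vbox vbox_mono[OF dq]] B0 p_weight_nonneg[OF vp]
    by (intro mult_right_mono) auto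
  finally show ?thesis by (simp add: mult.assoc)
qed

lemma Am_abs_le:
  assumes vp: "valid_p s p" and vo: "valid_omega s \<omega>" and q: "q \<in> Vec s" and r: "r \<in> Vec s"
    and rq: "vle s r q"
    and B: "\<And>t. t \<in> vbox s (\<lambda>i. q i - r i) \<Longrightarrow> counts_monomial s (cnt \<omega> k) (\<lambda>i. q i - r i) t \<le> B"
  shows "\<bar>Am s p \<omega> k q r\<bar> \<le> (\<Prod>i=1..s. fact (q i)) * real (card (vbox s q)) * p_weight s p q * B"
proof -
  have "fact_ratio s q r \<le> (\<Prod>i=1..s. fact (q i))"
    unfolding fact_ratio_def
    by (intro prod_mono conjI) (auto intro: order_trans[OF divide_left_mono[of 1]])
  moreover have "\<bar>gf_coeff s p (cnt \<omega> k) (\<lambda>i. q i - r i)\<bar> \<le> real (card (vbox s q)) * p_weight s p q * B"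
    by (rule gf_coeff_abs_le[OF vp _ B]) (simp add: vle_def)
  moreover have "0 \<le> fact_ratio s q r" unfolding fact_ratio_def by (simp add: prod_nonneg)
  ultimately show ?thesis
    unfolding Am_eq_Aclosed[OF vp vo q r] Aclosed_def using rq
    by (auto simp: abs_mult mult.assoc intro: mult_mono)
qed

lemma counts_monomial_le:
  assumes t: "t \<in> vbox s d"
  shows "counts_monomial s c d t \<le> (\<Prod>i=1..s. real (max 1 (c i)) ^ d i) * real (max 1 (c (s + 1))) ^ vabs s d"
proof -
  have "vabs s t \<le> vabs s d" unfolding vabs_def using vbox_le[OF t] by (intro sum_mono)
  then show ?thesis
    unfolding counts_monomial_def
    by (intro mult_mono prod_mono conjI power_increasing) (auto intro: prod_nonneg)
qed

lemma counts_monomial_le_pow: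
  assumes t: "t \<in> vbox s d" and dq: "vle s d q" and c: "\<And>j. c j \<le> k" and k: "1 \<le> k"
  shows "counts_monomial s c d t \<le> real k ^ vabs s q"
proof -
  have tle: "\<forall>i\<in>{1..s}. t i \<le> d i" using vbox_le[OF t] by blast
  have "(\<Sum>i=1..s. d i - t i) + vabs s t = vabs s d"
    unfolding vabs_def using tle by (simp add: sum.distrib[symmetric])
  then have "counts_monomial s (\<lambda>_. k) d t = real k ^ vabs s d"
    unfolding counts_monomial_def using k
    by (simp add: power_sum[symmetric] power_add[symmetric] max_def del: One_nat_def)
  moreover have "counts_monomial s c d t \<le> counts_monomial s (\<lambda>_. k) d t"
    unfolding counts_monomial_def using c k
    by (intro mult_mono prod_mono conjI power_mono) (auto intro: prod_nonneg)
  moreover have "vabs s d \<le> vabs s q"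
    unfolding vabs_def using dq by (intro sum_mono) (simp add: vle_def)
  then have "real k ^ vabs s d \<le> real k ^ vabs s q" using k by (intro power_increasing) auto
  ultimately show ?thesis by linarith
qed

lemma Am_upper_bounds:
  assumes vp: "valid_p s p" and q: "q \<in> Vec s"
  shows "\<exists>K::real. K \<ge> 1 \<and> (\<forall>\<omega> k r. valid_omega s \<omega> \<and> k \<ge> 1 \<and> r \<in> Vec s \<and> vle s r q \<longrightarrow>
           \<bar>Am s p \<omega> k q r\<bar> \<le> K * (\<Prod>i=1..s. real (max 1 (cnt \<omega> k i)) ^ (q i - r i))
                                    * real (max 1 (cnt \<omega> k (s + 1))) ^ (vabs s q - vabs s r)
         \<and> \<bar>Am s p \<omega> k q r\<bar> \<le> K * real k ^ vabs s q)"
proof (intro exI conjI allI impI)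
  define K0 where "K0 = (\<Prod>i=1..s. fact (q i)) * real (card (vbox s q)) * p_weight s p q"
  show "max 1 K0 \<ge> 1" by simp
  fix \<omega> and k :: nat and r assume "valid_omega s \<omega> \<and> k \<ge> 1 \<and> r \<in> Vec s \<and> vle s r q"
  then have vo: "valid_omega s \<omega>" and k: "k \<ge> 1" and r: "r \<in> Vec s" and rq: "vle s r q" by auto
  let ?d = "\<lambda>i. q i - r i"
  have bound: "\<bar>Am s p \<omega> k q r\<bar> \<le> max 1 K0 * B"
    if B: "\<And>t. t \<in> vbox s ?d \<Longrightarrow> counts_monomial s (cnt \<omega> k) ?d t \<le> B" for B
  proof -
    have "0 \<le> B" using B[OF zero_in_vbox] counts_monomial_nonneg by (rule order_trans[rotated])
    then have "K0 * B \<le> max 1 K0 * B" by (intro mult_right_mono) auto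
    with Am_abs_le[OF vp vo q r rq B] show ?thesis unfolding K0_def by linarith
  qed
  have "vabs s ?d = vabs s q - vabs s r"
    unfolding vabs_def using rq by (intro sum_subtractf_nat) (auto simp: vle_def)
  then show "\<bar>Am s p \<omega> k q r\<bar> \<le> max 1 K0 * (\<Prod>i=1..s. real (max 1 (cnt \<omega> k i)) ^ (q i - r i))
      * real (max 1 (cnt \<omega> k (s + 1))) ^ (vabs s q - vabs s r)"
    using bound[OF counts_monomial_le] by (simp add: mult.assoc)
  show "\<bar>Am s p \<omega> k q r\<bar> \<le> max 1 K0 * real k ^ vabs s q"
    by (rule bound, rule counts_monomial_le_pow[OF _ _ cnt_le k]) (auto simp: vle_def)
qed

lemma pow_div_le_binomial:
  assumes "d \<le> c" "d \<le> (q::nat)"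
  shows "real c ^ d / (real q + 1) ^ q \<le> real (c choose d)"
proof -
  have "real d ^ d \<le> (real q + 1) ^ q"
    using assms by (intro order_trans[OF power_mono power_increasing]) auto
  then have "real c ^ d / (real q + 1) ^ q \<le> real c ^ d / real d ^ d"
    by (cases "d = 0") (auto intro: divide_left_mono)
  also have "\<dots> = (real c / real d) ^ d" by (simp add: power_divide)
  also have "\<dots> \<le> real c gchoose d"
    by (rule gbinomial_ge_n_over_k_pow_k) (use assms in simp)
  finally show ?thesis by (simp add: binomial_gbinomial)
qed

lemma Am_ge_counts_power:
  assumes vp: "valid_p s p" and vo: "valid_omega s \<omega>" and q: "q \<in> Vec s" and r: "r \<in> Vec s"
    and rq: "vle s r q" and no_last: "\<forall>j\<in>{1..k}. \<omega> j \<noteq> s + 1"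
    and large: "\<forall>i\<in>{1..s}. cnt \<omega> k i > q i - r i"
  shows "Am s p \<omega> k q r \<ge> (\<Prod>i=1..s. 1 / (real (q i) + 1) ^ q i) * (\<Prod>i=1..s. real (cnt \<omega> k i) ^ (q i - r i))"
proof -
  let ?c = "cnt \<omega> k"
  have no_last_cnt: "?c (s + 1) = 0" using no_last by (auto simp: cnt_def)
  have Am: "Am s p \<omega> k q r
      = (\<Prod>i=1..s. fact (q i) / fact (r i) * (real (?c i choose (q i - r i)) * (1 / p i) ^ (q i - r i)))"
    using rq unfolding Am_eq_Aclosed[OF vp vo q r] Aclosed_def fact_ratio_def gf_factor_def
      gf_coeff_no_high[where c = "cnt \<omega> k" and s = s, OF no_last_cnt]
    by (simp add: prod.distrib[symmetric])
  have "1 / (real (q i) + 1) ^ q i * real (?c i) ^ (q i - r i)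
      \<le> fact (q i) / fact (r i) * (real (?c i choose (q i - r i)) * (1 / p i) ^ (q i - r i))"
    if i: "i \<in> {1..s}" for i
  proof -
    have rqi: "r i \<le> q i" using rq i by (simp add: vle_def)
    have "1 / (real (q i) + 1) ^ q i * real (?c i) ^ (q i - r i) \<le> real (?c i choose (q i - r i))"
      using pow_div_le_binomial[of "q i - r i" "?c i" "q i"] large i by (simp add: less_imp_le)
    also have "\<dots> \<le> real (?c i choose (q i - r i)) * (1 / p i) ^ (q i - r i)"
      using one_le_inverse_p[OF vp, of i] i by (simp add: mult_le_cancel_left1 one_le_power)
    also have "\<dots> \<le> fact (q i) / fact (r i) * (real (?c i choose (q i - r i)) * (1 / p i) ^ (q i - r i))"
    proof -
      have "1 \<le> fact (q i) / (fact (r i) :: real)"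
        using fact_mono[OF rqi, where 'a = real] by simp
      moreover have "0 \<le> real (?c i choose (q i - r i)) * (1 / p i) ^ (q i - r i)"
        using p_pos[OF vp, of i] i by simp
      ultimately show ?thesis by (metis mult_1 mult_right_mono)
    qed
    finally show ?thesis .
  qed
  then show ?thesis
    unfolding Am prod.distrib[symmetric] by (intro prod_mono) auto
qed

theorem mainTheorem17:
  fixes s :: nat
  assumes "s \<ge> 1"
  shows
    "(\<forall>p \<omega> k q r. valid_p s p \<and> valid_omega s \<omega> \<and> k \<ge> 1 \<and>
        q \<in> Vec s \<and> r \<in> Vec s \<and> vle s r q \<longrightarrow>
        Am s p \<omega> k q r = Aformula s p \<omega> k q r)
   \<and> (\<forall>p q. valid_p s p \<and> q \<in> Vec s \<longrightarrow>
        (\<exists>K::real. K \<ge> 1 \<and> (\<forall>\<omega> k r. valid_omega s \<omega> \<and> k \<ge> 1 \<and> r \<in> Vec s \<and> vle s r q \<longrightarrow>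
           \<bar>Am s p \<omega> k q r\<bar> \<le> K * (\<Prod>i=1..s. real (max 1 (cnt \<omega> k i)) ^ (q i - r i))
                                    * real (max 1 (cnt \<omega> k (s + 1))) ^ (vabs s q - vabs s r)
         \<and> \<bar>Am s p \<omega> k q r\<bar> \<le> K * real k ^ vabs s q)))
   \<and> (\<forall>q. q \<in> Vec s \<longrightarrow>
        (\<exists>K'::real. K' > 0 \<and> (\<forall>p \<omega> k r. valid_p s p \<and> valid_omega s \<omega> \<and> k \<ge> 1 \<and>
           r \<in> Vec s \<and> vle s r q \<and> (\<forall>j\<in>{1..k}. \<omega> j \<noteq> s + 1) \<and>
           (\<forall>i\<in>{1..s}. cnt \<omega> k i > q i - r i) \<longrightarrow>
           Am s p \<omega> k q r \<ge> K' * (\<Prod>i=1..s. real (cnt \<omega> k i) ^ (q i - r i)))))"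
  apply (intro conjI allI impI)
  subgoal using Am_eq_Aformula by blast
  subgoal using Am_upper_bounds by blast
  subgoal premises q_Vec for q
  proof -
    have "(\<Prod>i=1..s. 1 / (real (q i) + 1) ^ q i) > 0" by (intro prod_pos) simp
    then show ?thesis using Am_ge_counts_power[OF _ _ q_Vec] by blast
  qed
  done

end
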